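(* Assume $v_\circ<v_\bullet$ and fix $v<v_\bullet$. For every $k'\in\mathbb N$ there exist $k_2\ge k'$ and $\rho_0\ge1$ (large enough) such that $p_{k_2}<e^{-\log^{3/2}L_{k_2}}$.
   Context: Fix $q\in(0,1)$, $p_\circ,p_\bullet\in[0,1]$, $v_\circ=2p_\circ-1$, $v_\bullet=2p_\bullet-1$. Under $\mathbb P^\rho$: $\omega$ is a Poisson point process of intensity $\rho\sum_xP_x$ on two-sided paths $w:\mathbb Z\to\mathbb Z$, where $P_x$ is the law of a two-sided lazy simple random walk (steps $-1,0,1$ with probabilities $\frac{1-q}2,q,\frac{1-q}2$) with $w(0)=x$; independently $(U_y)_{y\in\mathbb Z^2}$ are i.i.d. uniform $[0,1]$. $\mathcal T=\{(w(n),n): w\in\omega, n\in\mathbb Z\}$. For $y\in\mathbb Z^2$, $Y^y_0=y$ and $Y^y_{i+1}=Y^y_i+(1,1)$ if ($Y^y_i\in\mathcal T$, $U_{Y^y_i}\le p_\bullet$) or ($Y^y_i\notin\mathcal T$, $U_{Y^y_i}\le p_\circ$), else $Y^y_{i+1}=Y^y_i+(-1,1)$; $X^y$ is the spatial coordinate of $Y^y$. Scales: $L_0=100$, $L_{k+1}=\lfloor L_k^{1/2}\rfloor L_k$. $I_L=([0,L]\times\{0\})\cap\mathbb Z^2$, $I_L(m)=(rL,sL)+I_L$ for $m=(r,s)$. Velocities: $\delta=\frac12(v_\bullet-v)$, $v_1=v_\bullet-\delta$, $v_{k+1}=v_k-\delta\frac{6}{\pi^2}\frac1{k^2}$. Bad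 events: $A_k(m)=\{\exists (x,n)\in I_{L_k}(m): X^{(x,n)}_{L_k}-x<v_kL_k\}$. Densities: $\rho_0>0$ given, $\rho_{k+1}=(1+L_k^{-1/16})\rho_k$. $p_k=\mathbb P^{\rho_k}(A_k(0))$. *)

theory Defs
  imports "HOL-Probability.Probability"
begin

text \<open>Index set of the independent coordinates of the underlying product probability space.
  Cnt x      : number of paths w of the Poisson process with w(0) = x (Poisson(rho));
  Stp x j i  : i-th increment w(i+1) - w(i) (i an integer) of the j-th such path
               (i.i.d. lazy steps -1,0,1 with probabilities (1-q)/2, q, (1-q)/2);
  Unf x n    : the uniform variable U_(x,n).
  A Poisson point process with intensity rho * sum_x P_x is realised as: independently for
  each x a Poisson(rho) number of i.i.d. P_x-distributed two-sided paths.\<close>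
datatype idx = Cnt int | Stp int nat int | Unf int int

definition step_pmf :: "real \<Rightarrow> int pmf" where
  "step_pmf q = pmf_of_list [(-1, (1 - q) / 2), (0, q), (1, (1 - q) / 2)]"

definition coord_measure :: "real \<Rightarrow> real \<Rightarrow> idx \<Rightarrow> real measure" where
  "coord_measure q \<rho> i = (case i of
      Cnt x \<Rightarrow> distr (measure_pmf (poisson_pmf \<rho>)) borel real
    | Stp x j n \<Rightarrow> distr (measure_pmf (step_pmf q)) borel real_of_int
    | Unf x n \<Rightarrow> uniform_measure lborel {0..1})"

definition Prho :: "real \<Rightarrow> real \<Rightarrow> (idx \<Rightarrow> real) measure" where
  "Prho q \<rho> = PiM UNIV (coord_measure q \<rho>)"

definition cnt :: "(idx \<Rightarrow> real) \<Rightarrow> int \<Rightarrow> nat" where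
  "cnt \<omega> x = nat \<lfloor>\<omega> (Cnt x)\<rfloor>"

definition stp :: "(idx \<Rightarrow> real) \<Rightarrow> int \<Rightarrow> nat \<Rightarrow> int \<Rightarrow> int" where
  "stp \<omega> x j i = \<lfloor>\<omega> (Stp x j i)\<rfloor>"

definition path :: "(idx \<Rightarrow> real) \<Rightarrow> int \<Rightarrow> nat \<Rightarrow> int \<Rightarrow> int" where
  "path \<omega> x j n = (if 0 \<le> n then x + (\<Sum>i\<in>{0..<n}. stp \<omega> x j i)
                     else x - (\<Sum>i\<in>{n..<0}. stp \<omega> x j i))"

definition trace :: "(idx \<Rightarrow> real) \<Rightarrow> (int \<times> int) set" where
  "trace \<omega> = {(path \<omega> x j n, n) | x j n. j < cnt \<omega> x}"

definition U :: "(idx \<Rightarrow> real) \<Rightarrow> int \<times> int \<Rightarrow> real" where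
  "U \<omega> y = \<omega> (Unf (fst y) (snd y))"

fun Y :: "real \<Rightarrow> real \<Rightarrow> (idx \<Rightarrow> real) \<Rightarrow> int \<times> int \<Rightarrow> nat \<Rightarrow> int \<times> int" where
  "Y pc pb \<omega> y 0 = y"
| "Y pc pb \<omega> y (Suc i) =
     (let z = Y pc pb \<omega> y i in
      if (z \<in> trace \<omega> \<and> U \<omega> z \<le> pb) \<or> (z \<notin> trace \<omega> \<and> U \<omega> z \<le> pc)
      then (fst z + 1, snd z + 1) else (fst z - 1, snd z + 1))"

definition X :: "real \<Rightarrow> real \<Rightarrow> (idx \<Rightarrow> real) \<Rightarrow> int \<times> int \<Rightarrow> nat \<Rightarrow> int" where
  "X pc pb \<omega> y i = fst (Y pc pb \<omega> y i)"

fun Lsc :: "nat \<Rightarrow> nat" where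
  "Lsc 0 = 100"
| "Lsc (Suc k) = nat \<lfloor>sqrt (real (Lsc k))\<rfloor> * Lsc k"

text \<open>Velocities v_k, k >= 1 (the value at k = 0 is irrelevant and set equal to v_1).\<close>
fun vel :: "real \<Rightarrow> real \<Rightarrow> nat \<Rightarrow> real" where
  "vel vb v 0 = vb - (vb - v) / 2"
| "vel vb v (Suc 0) = vb - (vb - v) / 2"
| "vel vb v (Suc (Suc k)) = vel vb v (Suc k) - ((vb - v) / 2) * (6 / pi^2) * (1 / (real (Suc k))^2)"

fun dens :: "real \<Rightarrow> nat \<Rightarrow> real" where
  "dens \<rho>0 0 = \<rho>0"
| "dens \<rho>0 (Suc k) = (1 + real (Lsc k) powr (-1/16)) * dens \<rho>0 k"

definition Abad :: "real \<Rightarrow> real \<Rightarrow> real \<Rightarrow> real \<Rightarrow> nat \<Rightarrow> (idx \<Rightarrow> real) set" where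
  "Abad pc pb vb v k = {\<omega>. \<exists>x::int. 0 \<le> x \<and> x \<le> int (Lsc k) \<and>
       real_of_int (X pc pb \<omega> (x, 0) (Lsc k) - x) < vel vb v k * real (Lsc k)}"

definition pk :: "real \<Rightarrow> real \<Rightarrow> real \<Rightarrow> real \<Rightarrow> real \<Rightarrow> nat \<Rightarrow> real" where
  "pk q pc pb v \<rho>0 k = measure (Prho q (dens \<rho>0 k)) (Abad pc pb (2 * pb - 1) v k)"

end

theory Submission
  imports Defs "HOL-Real_Asymp.Real_Asymp"
begin

text \<open>Fix a scale \<open>L = L\<^sub>k\<close>. If every site of the space-time box
  \<open>[-L, 2L] \<times> [0, L)\<close> lies on the trace of the Poisson cloud, the walk started in \<open>I\<^sub>L\<close> only
  sees occupied sites during its first \<open>L\<close> steps, so its displacement is a sum of \<open>L\<close> independent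
  \<open>\<pm>1\<close> steps of mean \<open>v\<^sub>\<bullet> > v\<^sub>k\<close>; a Chernoff bound makes the bad event exponentially unlikely in
  \<open>L\<close>, which beats \<open>exp (- log\<^sup>3\<^sup>/\<^sup>2 L)\<close> once \<open>k\<close> is large. A site \<open>(y, m)\<close> is missed only if
  fewer than \<open>M\<close> paths start at \<open>y\<close>, or each of the first \<open>M\<close> of them moves before time \<open>m\<close>;
  choosing \<open>M\<close> and then \<open>\<rho>\<^sub>0\<close> large makes the union of these events over the box as small as
  needed.\<close>

subsection \<open>The product measure\<close>

lemma sets_coord_measure [simp]: "sets (coord_measure q \<rho> i) = sets borel"
  by (cases i) (auto simp: coord_measure_def)

lemma space_coord_measure [simp]: "space (coord_measure q \<rho> i) = UNIV"
  using sets_eq_imp_space_eq[OF sets_coord_measure] by simp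

lemma prob_space_coord_measure: "prob_space (coord_measure q \<rho> i)"
  by (cases i) (auto simp: coord_measure_def intro!: prob_space.prob_space_distr
      prob_space_measure_pmf prob_space_uniform_measure)

lemma product_prob_space_coord_measure: "product_prob_space (coord_measure q \<rho>)"
  unfolding product_prob_space_def product_prob_space_axioms_def product_sigma_finite_def
  using prob_space_coord_measure by (auto intro: prob_space_imp_sigma_finite)

lemma space_Prho [simp]: "space (Prho q \<rho>) = UNIV"
  by (auto simp: Prho_def space_PiM coord_measure_def split: idx.splits)

lemma prob_space_Prho: "prob_space (Prho q \<rho>)"
proof -
  interpret product_prob_space "coord_measure q \<rho>" UNIV
    by (rule product_prob_space_coord_measure)
  show ?thesis unfolding Prho_def by (rule P.prob_space_axioms)
qed

lemma Prho_cylinder: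
  fixes g :: "'a \<Rightarrow> idx"
  assumes F: "finite F" "inj_on g F" and B: "\<And>a. a \<in> F \<Longrightarrow> B a \<in> sets borel"
  shows "{\<omega>. \<forall>a\<in>F. \<omega> (g a) \<in> B a} \<in> sets (Prho q \<rho>)"
    and "measure (Prho q \<rho>) {\<omega>. \<forall>a\<in>F. \<omega> (g a) \<in> B a} =
           (\<Prod>a\<in>F. measure (coord_measure q \<rho> (g a)) (B a))"
proof -
  interpret product_prob_space "coord_measure q \<rho>" UNIV
    by (rule product_prob_space_coord_measure)
  define A where "A j = B (the_inv_into F g j)" for j
  have AB: "a \<in> F \<Longrightarrow> A (g a) = B a" for a using F by (simp add: A_def the_inv_into_f_f)
  have eq: "{\<omega>. \<forall>a\<in>F. \<omega> (g a) \<in> B a} = {x\<in>space (Prho q \<rho>). \<forall>j\<in>g`F. x j \<in> A j}"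
    using AB by auto
  have A: "j \<in> g`F \<Longrightarrow> A j \<in> sets (coord_measure q \<rho> j)" for j using AB B by auto
  show "{\<omega>. \<forall>a\<in>F. \<omega> (g a) \<in> B a} \<in> sets (Prho q \<rho>)"
    unfolding eq Prho_def using F A
    by (intro sets.sets_Collect_finite_All sets_Collect_single') (auto simp: image_iff)
  have "emeasure (Prho q \<rho>) {x\<in>space (Prho q \<rho>). \<forall>j\<in>g`F. x j \<in> A j} =
          (\<Prod>j\<in>g`F. emeasure (coord_measure q \<rho> j) (A j))"
    unfolding Prho_def using F A by (intro emeasure_PiM_Collect) auto
  then have "measure (Prho q \<rho>) {\<omega>. \<forall>a\<in>F. \<omega> (g a) \<in> B a} =
               enn2real (\<Prod>j\<in>g`F. emeasure (coord_measure q \<rho> j) (A j))"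
    by (simp add: eq measure_def)
  also have "\<dots> = (\<Prod>j\<in>g`F. measure (coord_measure q \<rho> j) (A j))"
    by (simp add: M.emeasure_eq_measure prod_ennreal prod_nonneg)
  also have "\<dots> = (\<Prod>a\<in>F. measure (coord_measure q \<rho> (g a)) (B a))"
    using F by (simp add: prod.reindex AB)
  finally show "measure (Prho q \<rho>) {\<omega>. \<forall>a\<in>F. \<omega> (g a) \<in> B a} =
                  (\<Prod>a\<in>F. measure (coord_measure q \<rho> (g a)) (B a))" .
qed

lemma measure_Cnt_lessThan:
  "measure (coord_measure q \<rho> (Cnt y)) {..<real M} = (\<Sum>k<M. pmf (poisson_pmf \<rho>) k)"
proof -
  have "real -` {..<real M} = {..<M}" by auto
  then show ?thesis by (simp add: coord_measure_def measure_distr measure_measure_pmf_finite)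
qed

lemma measure_Stp_zero:
  assumes "0 \<le> q" "q \<le> 1"
  shows "measure (coord_measure q \<rho> (Stp y j i)) {0..<1} = q"
proof -
  have "real_of_int -` {0..<1} = {0}" by auto
  moreover have "pmf_of_list_wf [(-1::int, (1 - q) / 2), (0, q), (1, (1 - q) / 2)]"
    using assms by (auto simp: pmf_of_list_wf_def)
  ultimately show ?thesis
    by (simp add: coord_measure_def measure_distr measure_pmf_single step_pmf_def pmf_pmf_of_list)
qed

lemma measure_Stp_nonzero:
  assumes "0 \<le> q" "q \<le> 1"
  shows "measure (coord_measure q \<rho> (Stp y j i)) (- {0..<1}) = 1 - q"
proof -
  interpret prob_space "coord_measure q \<rho> (Stp y j i)" by (rule prob_space_coord_measure)
  show ?thesis
    using prob_compl[of "{0..<1}"] by (simp add: Compl_eq_Diff_UNIV measure_Stp_zero[OF assms])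
qed

lemma measure_Unf_atMost:
  assumes "0 \<le> p" "p \<le> 1"
  shows "measure (coord_measure q \<rho> (Unf a b)) {..p} = p"
proof -
  have "emeasure (coord_measure q \<rho> (Unf a b)) {..p} = ennreal p"
    using assms by (simp add: coord_measure_def emeasure_uniform_measure Int_commute min_def
        divide_ennreal_def)
  then show ?thesis using assms by (simp add: measure_def)
qed

lemma measure_Unf_greaterThan:
  assumes "0 \<le> p" "p \<le> 1"
  shows "measure (coord_measure q \<rho> (Unf a b)) {p<..} = 1 - p"
proof -
  interpret prob_space "coord_measure q \<rho> (Unf a b)" by (rule prob_space_coord_measure)
  have "UNIV - {..p} = {p<..}" by auto
  then show ?thesis
    using prob_compl[of "{..p}"] by (simp add: measure_Unf_atMost[OF assms])
qed

subsection \<open>A Chernoff bound\<close>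

lemma chernoff_base_lt_one:
  fixes a p :: real
  assumes "a < p" "0 < p" "p \<le> 1"
  shows "\<exists>t>1. 0 < t powr a * (p / t + (1 - p)) \<and> t powr a * (p / t + (1 - p)) < 1"
proof -
  define f where "f t = t powr a * (p / t + (1 - p))" for t :: real
  have "(f has_real_derivative (a * 1 powr (a - 1) * (p / 1 + (1 - p)) + 1 powr a * (- p / 1\<^sup>2)))
          (at 1)"
    unfolding f_def by (auto intro!: derivative_eq_intros simp: power2_eq_square)
  then have "(f has_real_derivative (a - p)) (at 1)" by simp
  then obtain d where "d > 0" and "\<And>h. h > 0 \<Longrightarrow> h < d \<Longrightarrow> f (1 + h) < f 1"
    using DERIV_neg_dec_right assms(1) by (metis diff_less_0_iff_less)
  then have "f (1 + d/2) < 1" by (simp add: f_def)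
  moreover have "0 < f (1 + d/2)"
    using \<open>d > 0\<close> assms(2,3) by (simp add: f_def add_pos_nonneg)
  ultimately show ?thesis using \<open>d > 0\<close> by (intro exI[of _ "1 + d/2"]) (simp add: f_def)
qed

definition low_count_seqs :: "real \<Rightarrow> nat \<Rightarrow> (nat \<Rightarrow> bool) set" where
  "low_count_seqs a L = {s \<in> Pi\<^sub>E {..<L} (\<lambda>_. UNIV). real (card {i\<in>{..<L}. s i}) < a * L}"

lemma finite_low_count_seqs: "finite (low_count_seqs a L)"
  unfolding low_count_seqs_def
  by (rule finite_subset[OF _ finite_PiE[of "{..<L}" "\<lambda>_. UNIV :: bool set"]]) auto

lemma chernoff_bound:
  fixes p a t :: real
  assumes t: "t > 1" and p: "0 \<le> p" "p \<le> 1"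
  shows "(\<Sum>s\<in>low_count_seqs a L. \<Prod>i<L. if s i then p else 1 - p)
           \<le> (t powr a * (p / t + (1 - p))) ^ L"
proof -
  let ?P = "Pi\<^sub>E {..<L} (\<lambda>_. UNIV::bool set)"
  let ?w = "\<lambda>s. \<Prod>i<L. if s i then p else 1 - p"
  let ?w' = "\<lambda>s. t powr (a * L) * (\<Prod>i<L. if s i then p / t else 1 - p)"
  \<comment> \<open>Exponential tilting: \<open>t\<^sup>a\<^sup>L\<^sup>-\<^sup>c \<ge> 1\<close> when only \<open>c < a L\<close> steps are up.\<close>
  have tilt: "?w s \<le> ?w' s" if "real (card {i\<in>{..<L}. s i}) < a * L" for s
  proof -
    let ?c = "card {i\<in>{..<L}. s i}"
    have "1 \<le> t powr (a * L - ?c)" using t that by (intro ge_one_powr_ge_zero) auto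
    moreover have "0 \<le> ?w s" using p by (intro prod_nonneg) auto
    ultimately have "?w s \<le> ?w s * t powr (a * L - ?c)"
      by (simp add: mult_le_cancel_left1)
    also have "t powr (a * L - ?c) = t powr (a * L) / (\<Prod>i<L. if s i then t else 1)"
      using t by (simp add: powr_diff powr_realpow prod.If_cases Int_def conj_commute)
    also have "?w s * \<dots> =
        t powr (a * L) * (\<Prod>i<L. (if s i then p else 1 - p) / (if s i then t else 1))"
      by (simp add: prod_dividef)
    also have "\<dots> = ?w' s"
      by (intro arg_cong[where f = "(*) _"] prod.cong) auto
    finally show ?thesis .
  qed
  have "(\<Sum>s\<in>low_count_seqs a L. ?w s) \<le> (\<Sum>s\<in>low_count_seqs a L. ?w' s)"
    using tilt by (intro sum_mono) (auto simp: low_count_seqs_def)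
  also have "\<dots> \<le> (\<Sum>s\<in>?P. ?w' s)"
    using t p by (intro sum_mono2 finite_PiE mult_nonneg_nonneg prod_nonneg)
      (auto simp: low_count_seqs_def)
  also have "\<dots> = t powr (a * L) * (\<Sum>s\<in>?P. \<Prod>i<L. if s i then p / t else 1 - p)"
    by (simp add: sum_distrib_left)
  also have "\<dots> = t powr (a * L) * (\<Prod>i<L. \<Sum>b\<in>UNIV. if b then p / t else 1 - p)"
    by (subst prod_sum_PiE) auto
  also have "\<dots> = (t powr a * (p / t + (1 - p))) ^ L"
    using t by (simp add: UNIV_bool add.commute powr_power mult.commute power_mult_distrib)
  finally show ?thesis .
qed

subsection \<open>Events of the environment\<close>

definition step_sign :: "bool \<Rightarrow> int" where
  "step_sign b = (if b then 1 else -1)"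

definition sign_walk :: "int \<Rightarrow> (nat \<Rightarrow> bool) \<Rightarrow> nat \<Rightarrow> int" where
  "sign_walk x s i = x + (\<Sum>l<i. step_sign (s l))"

text \<open>A walk that reads its steps off the uniforms with threshold \<open>p\<close> (as on the trace, with
  \<open>p = p\<^sub>\<bullet>\<close>) follows the step sequence \<open>s\<close> from \<open>(x, 0)\<close>.\<close>
definition choice_event :: "real \<Rightarrow> int \<Rightarrow> nat \<Rightarrow> (nat \<Rightarrow> bool) \<Rightarrow> (idx \<Rightarrow> real) set" where
  "choice_event p x L s =
     {\<omega>. \<forall>i\<in>{..<L}. \<omega> (Unf (sign_walk x s i) (int i)) \<in> (if s i then {..p} else {p<..})}"

definition few_paths_event :: "int \<Rightarrow> nat \<Rightarrow> (idx \<Rightarrow> real) set" where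
  "few_paths_event y M = {\<omega>. \<omega> (Cnt y) < real M}"

text \<open>Each path \<open>j < M\<close> started at \<open>y\<close> moves for the first time at step \<open>f j\<close>; a step is
  zero iff its coordinate lies in \<open>[0, 1)\<close>.\<close>
definition first_jump_event :: "int \<Rightarrow> nat \<Rightarrow> (nat \<Rightarrow> nat) \<Rightarrow> (idx \<Rightarrow> real) set" where
  "first_jump_event y M f =
     {\<omega>. \<forall>(j, i)\<in>(SIGMA j:{..<M}. {..<Suc (f j)}).
           \<omega> (Stp y j (int i)) \<in> (if i < f j then {0..<1} else - {0..<1})}"

definition uncovered_event :: "int \<Rightarrow> nat \<Rightarrow> nat \<Rightarrow> (idx \<Rightarrow> real) set" where
  "uncovered_event y m M =
     few_paths_event y M \<union> (\<Union>f\<in>Pi\<^sub>E {..<M} (\<lambda>_. {..<m}). first_jump_event y M f)"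

definition space_time_box :: "nat \<Rightarrow> (int \<times> int) set" where
  "space_time_box L = {- int L..2 * int L} \<times> {0..<int L}"

lemma choice_event_in_sets:
  "choice_event p x L s \<in> sets (Prho q \<rho>)"
  unfolding choice_event_def
  by (rule Prho_cylinder(1)) (auto simp: inj_on_def)

lemma measure_choice_event:
  assumes "0 \<le> p" "p \<le> 1"
  shows "measure (Prho q \<rho>) (choice_event p x L s) = (\<Prod>i<L. if s i then p else 1 - p)"
  unfolding choice_event_def
  using assms by (subst Prho_cylinder(2)) (auto simp: inj_on_def intro!: prod.cong
      simp: measure_Unf_atMost measure_Unf_greaterThan)

lemma few_paths_event_eq: "few_paths_event y M = {\<omega>. \<forall>a\<in>{()}. \<omega> (Cnt y) \<in> {..<real M}}"
  by (auto simp: few_paths_event_def)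

lemma few_paths_event_in_sets: "few_paths_event y M \<in> sets (Prho q \<rho>)"
  unfolding few_paths_event_eq by (rule Prho_cylinder(1)) auto

lemma measure_few_paths_event:
  "measure (Prho q \<rho>) (few_paths_event y M) = (\<Sum>k<M. pmf (poisson_pmf \<rho>) k)"
  unfolding few_paths_event_eq by (subst Prho_cylinder(2)) (auto simp: measure_Cnt_lessThan)

lemma first_jump_event_eq:
  "first_jump_event y M f =
     {\<omega>. \<forall>a\<in>(SIGMA j:{..<M}. {..<Suc (f j)}).
           \<omega> ((\<lambda>(j, i). Stp y j (int i)) a) \<in> (\<lambda>(j, i). if i < f j then {0..<1} else - {0..<1}) a}"
  by (auto simp: first_jump_event_def)

lemma first_jump_event_in_sets: "first_jump_event y M f \<in> sets (Prho q \<rho>)"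
  unfolding first_jump_event_eq
  by (rule Prho_cylinder(1)) (auto simp: inj_on_def split: prod.splits)

lemma measure_first_jump_event:
  assumes "0 \<le> q" "q \<le> 1"
  shows "measure (Prho q \<rho>) (first_jump_event y M f) = (\<Prod>j<M. q ^ f j * (1 - q))"
proof -
  have "measure (Prho q \<rho>) (first_jump_event y M f) =
          (\<Prod>(j, i)\<in>(SIGMA j:{..<M}. {..<Suc (f j)}). if i < f j then q else 1 - q)"
    unfolding first_jump_event_eq using assms
    by (subst Prho_cylinder(2)) (auto simp: inj_on_def measure_Stp_zero measure_Stp_nonzero
        split: prod.splits intro!: prod.cong)
  also have "\<dots> = (\<Prod>j<M. \<Prod>i<Suc (f j). if i < f j then q else 1 - q)"
    by (subst prod.Sigma) auto
  finally show ?thesis by simp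
qed

lemma uncovered_event_in_sets: "uncovered_event y m M \<in> sets (Prho q \<rho>)"
  unfolding uncovered_event_def
  by (intro sets.Un sets.finite_UN finite_PiE few_paths_event_in_sets first_jump_event_in_sets)
    auto

lemma measure_uncovered_event_le:
  assumes "0 \<le> q" "q \<le> 1"
  shows "measure (Prho q \<rho>) (uncovered_event y m M)
           \<le> (\<Sum>k<M. pmf (poisson_pmf \<rho>) k) + (1 - q ^ m) ^ M"
proof -
  interpret prob_space "Prho q \<rho>" by (rule prob_space_Prho)
  let ?F = "Pi\<^sub>E {..<M} (\<lambda>_. {..<m})"
  have jumps: "(\<Union>f\<in>?F. first_jump_event y M f) \<in> events"
    by (intro sets.finite_UN finite_PiE) (auto simp: first_jump_event_in_sets)
  have "measure (Prho q \<rho>) (\<Union>f\<in>?F. first_jump_event y M f)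
          \<le> (\<Sum>f\<in>?F. measure (Prho q \<rho>) (first_jump_event y M f))"
    by (rule finite_measure_subadditive_finite) (simp_all add: finite_PiE first_jump_event_in_sets image_subset_iff)
  also have "\<dots> = (\<Sum>f\<in>?F. \<Prod>j<M. q ^ f j * (1 - q))"
    by (simp add: measure_first_jump_event[OF assms])
  also have "\<dots> = (\<Prod>j<M. \<Sum>i<m. q ^ i * (1 - q))"
    by (subst prod_sum_PiE) auto
  also have "\<dots> = (1 - q ^ m) ^ M"
    by (simp add: one_diff_power_eq sum_distrib_left mult.commute)
  finally show ?thesis
    using measure_Un_le[OF few_paths_event_in_sets[of y M] jumps]
    unfolding uncovered_event_def measure_few_paths_event by linarith
qed

subsection \<open>Sites off the trace\<close>

lemma stp_eq_zero_iff: "stp \<omega> y j i = 0 \<longleftrightarrow> \<omega> (Stp y j i) \<in> {0..<1}"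
  by (auto simp: stp_def floor_eq_iff)

lemma path_eq_start:
  assumes "\<And>i. i < m \<Longrightarrow> stp \<omega> y j (int i) = 0"
  shows "path \<omega> y j (int m) = y"
proof -
  have "stp \<omega> y j i = 0" if "i \<in> {0..<int m}" for i
    using assms[of "nat i"] that by auto
  then show ?thesis by (simp add: path_def)
qed

lemma first_jump_event_if_all_move:
  assumes "\<And>j. j < M \<Longrightarrow> \<exists>i<m. stp \<omega> y j (int i) \<noteq> 0"
  shows "\<exists>f\<in>Pi\<^sub>E {..<M} (\<lambda>_. {..<m}). \<omega> \<in> first_jump_event y M f"
proof -
  define f where "f = (\<lambda>j\<in>{..<M}. LEAST i. stp \<omega> y j (int i) \<noteq> 0)"
  have f: "f j < m" "stp \<omega> y j (int (f j)) \<noteq> 0" "\<And>i. i < f j \<Longrightarrow> stp \<omega> y j (int i) = 0"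
    if j: "j < M" for j
  proof -
    obtain i where "i < m" "stp \<omega> y j (int i) \<noteq> 0" using assms[OF j] by blast
    moreover have "f j = (LEAST i. stp \<omega> y j (int i) \<noteq> 0)" using j by (simp add: f_def)
    ultimately show "f j < m" "stp \<omega> y j (int (f j)) \<noteq> 0"
      "\<And>i. i < f j \<Longrightarrow> stp \<omega> y j (int i) = 0"
      using Least_le[of "\<lambda>i. stp \<omega> y j (int i) \<noteq> 0" i] LeastI[of "\<lambda>i. stp \<omega> y j (int i) \<noteq> 0" i]
        not_less_Least[of _ "\<lambda>i. stp \<omega> y j (int i) \<noteq> 0"]
      by simp_all
  qed
  have "f \<in> Pi\<^sub>E {..<M} (\<lambda>_. {..<m})" using f(1) by (auto simp: f_def)
  moreover have "\<omega> \<in> first_jump_event y M f"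
    unfolding first_jump_event_def
  proof (intro CollectI ballI, clarify)
    fix j i assume "j < M" "i < Suc (f j)"
    then have "stp \<omega> y j (int i) = 0 \<longleftrightarrow> i < f j"
      using f(2,3)[OF \<open>j < M\<close>] by (auto simp: less_Suc_eq)
    then show "\<omega> (Stp y j (int i)) \<in> (if i < f j then {0..<1} else - {0..<1})"
      unfolding stp_eq_zero_iff by simp
  qed
  ultimately show ?thesis by blast
qed

lemma notin_trace_imp_uncovered_event:
  assumes "(y, int m) \<notin> trace \<omega>"
  shows "\<omega> \<in> uncovered_event y m M"
proof (cases "\<omega> \<in> few_paths_event y M")
  case False
  then have "int M \<le> \<lfloor>\<omega> (Cnt y)\<rfloor>" by (simp add: few_paths_event_def le_floor_iff)
  then have "M \<le> cnt \<omega> y" unfolding cnt_def by linarith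
  have "\<exists>i<m. stp \<omega> y j (int i) \<noteq> 0" if "j < M" for j
  proof (rule ccontr)
    assume "\<not> (\<exists>i<m. stp \<omega> y j (int i) \<noteq> 0)"
    then have "path \<omega> y j (int m) = y" by (intro path_eq_start) blast
    moreover have "(path \<omega> y j (int m), int m) \<in> trace \<omega>"
      unfolding trace_def mem_Collect_eq using that \<open>M \<le> cnt \<omega> y\<close>
      by (intro exI[of _ y] exI[of _ j] exI[of _ "int m"]) simp
    ultimately show False using assms by simp
  qed
  then obtain f where "f \<in> Pi\<^sub>E {..<M} (\<lambda>_. {..<m})" "\<omega> \<in> first_jump_event y M f"
    using first_jump_event_if_all_move by blast
  then show ?thesis unfolding uncovered_event_def by blast
qed (simp add: uncovered_event_def)

subsection \<open>The walk on a fully covered box\<close>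

lemma sum_step_sign: "(\<Sum>l<L. step_sign (s l)) = 2 * int (card {l\<in>{..<L}. s l}) - int L"
proof -
  have "(\<Sum>l<L. step_sign (s l)) = (\<Sum>l<L. 2 * (if s l then 1 else 0) - 1)"
    by (intro sum.cong) (auto simp: step_sign_def)
  also have "\<dots> = 2 * (\<Sum>l<L. if s l then 1 else 0) - int L"
    by (simp add: sum_subtractf sum_distrib_left)
  also have "(\<Sum>l<L. if s l then 1 else 0) = (\<Sum>l\<in>{l\<in>{..<L}. s l}. 1::int)"
    by (subst sum.inter_filter) auto
  finally show ?thesis by simp
qed

lemma abs_sign_walk_le: "\<bar>sign_walk x s i - x\<bar> \<le> int i"
proof -
  have "\<bar>sign_walk x s i - x\<bar> \<le> (\<Sum>l<i. \<bar>step_sign (s l)\<bar>)"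
    unfolding sign_walk_def by (simp add: sum_abs)
  also have "\<dots> = (\<Sum>l<i. 1)" by (intro sum.cong) (auto simp: step_sign_def)
  also have "\<dots> = int i" by simp
  finally show ?thesis .
qed

lemma Y_eq_sign_walk:
  fixes pc pb :: real
  assumes x: "0 \<le> x" "x \<le> int L"
    and covered: "space_time_box L \<subseteq> trace \<omega>"
  defines "s \<equiv> \<lambda>l. U \<omega> (Y pc pb \<omega> (x, 0) l) \<le> pb"
  shows "i \<le> L \<Longrightarrow> Y pc pb \<omega> (x, 0) i = (sign_walk x s i, int i)"
proof (induction i)
  case (Suc i)
  then have IH: "Y pc pb \<omega> (x, 0) i = (sign_walk x s i, int i)" by simp
  have "\<bar>sign_walk x s i - x\<bar> \<le> int i" by (rule abs_sign_walk_le)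
  then have "(sign_walk x s i, int i) \<in> space_time_box L"
    using Suc.prems x by (auto simp: space_time_box_def)
  with covered have "(sign_walk x s i, int i) \<in> trace \<omega>" by blast
  then show ?case by (simp add: IH s_def sign_walk_def step_sign_def Let_def)
qed (simp add: sign_walk_def)

lemma walk_on_covered_box:
  fixes pc pb :: real
  assumes x: "0 \<le> x" "x \<le> int L"
    and covered: "space_time_box L \<subseteq> trace \<omega>"
  defines "s \<equiv> restrict (\<lambda>l. U \<omega> (Y pc pb \<omega> (x, 0) l) \<le> pb) {..<L}"
  shows "\<omega> \<in> choice_event pb x L s"
    and "X pc pb \<omega> (x, 0) L - x = 2 * int (card {l\<in>{..<L}. s l}) - int L"
proof -
  let ?s = "\<lambda>l. U \<omega> (Y pc pb \<omega> (x, 0) l) \<le> pb"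
  have Y: "Y pc pb \<omega> (x, 0) i = (sign_walk x s i, int i)" if "i \<le> L" for i
  proof -
    have "sign_walk x s i = sign_walk x ?s i"
      using that by (auto simp: sign_walk_def s_def intro!: sum.cong)
    then show ?thesis using Y_eq_sign_walk[OF x covered that] by simp
  qed
  show "\<omega> \<in> choice_event pb x L s"
    using Y by (auto simp: choice_event_def s_def U_def)
  have "{l\<in>{..<L}. s l} = {l\<in>{..<L}. ?s l}" by (auto simp: s_def)
  then show "X pc pb \<omega> (x, 0) L - x = 2 * int (card {l\<in>{..<L}. s l}) - int L"
    using Y[of L] by (simp add: X_def sign_walk_def sum_step_sign)
qed

subsection \<open>Bounding the bad event\<close>

lemma vel_le_first: "0 < vb - v \<Longrightarrow> vel vb v k \<le> vb - (vb - v) / 2"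
proof (induction vb v k rule: vel.induct)
  case (3 vb v k)
  then have "vel vb v (Suc k) \<le> vb - (vb - v) / 2"
    and "0 \<le> ((vb - v) / 2) * (6 / pi^2) * (1 / (real (Suc k))^2)" by simp_all
  then show ?case by simp
qed auto

lemma Abad_subset:
  fixes pc pb v :: real and k M :: nat
  assumes "v < 2 * pb - 1"
  defines "L \<equiv> Lsc k" and "a \<equiv> pb - (2 * pb - 1 - v) / 4"
  shows "Abad pc pb (2 * pb - 1) v k \<subseteq>
           (\<Union>x\<in>{0..int L}. \<Union>s\<in>low_count_seqs a L. choice_event pb x L s) \<union>
           (\<Union>z\<in>space_time_box L. uncovered_event (fst z) (nat (snd z)) M)"
proof
  fix \<omega> assume "\<omega> \<in> Abad pc pb (2 * pb - 1) v k"
  then obtain x where x: "0 \<le> x" "x \<le> int L"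
    and bad: "real_of_int (X pc pb \<omega> (x, 0) L - x) < vel (2 * pb - 1) v k * real L"
    unfolding Abad_def L_def by blast
  show "\<omega> \<in> (\<Union>x\<in>{0..int L}. \<Union>s\<in>low_count_seqs a L. choice_event pb x L s) \<union>
           (\<Union>z\<in>space_time_box L. uncovered_event (fst z) (nat (snd z)) M)"
  proof (cases "space_time_box L \<subseteq> trace \<omega>")
    case False
    then obtain z where z: "z \<in> space_time_box L" "z \<notin> trace \<omega>" by blast
    then have "(fst z, int (nat (snd z))) \<notin> trace \<omega>" by (auto simp: space_time_box_def)
    then have "\<omega> \<in> uncovered_event (fst z) (nat (snd z)) M"
      by (rule notin_trace_imp_uncovered_event)
    then show ?thesis using z(1) by blast
  next
    case True
    define s where "s = restrict (\<lambda>l. U \<omega> (Y pc pb \<omega> (x, 0) l) \<le> pb) {..<L}"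
    have "vel (2 * pb - 1) v k * real L \<le> ((2 * pb - 1) - ((2 * pb - 1) - v) / 2) * real L"
      using vel_le_first[of "2 * pb - 1" v k] assms(1) by (intro mult_right_mono) auto
    with bad walk_on_covered_box(2)[OF x True, where pc = pc and pb = pb]
    have "real (card {l\<in>{..<L}. s l}) < a * real L"
      by (simp add: s_def a_def algebra_simps)
    then have "s \<in> low_count_seqs a L" by (simp add: low_count_seqs_def s_def)
    then show ?thesis using x walk_on_covered_box(1)[OF x True, where pc = pc and pb = pb] by (auto simp: s_def)
  qed
qed

lemma measure_low_count_choices_le:
  assumes "0 \<le> pb" "pb \<le> 1" "t > 1"
  shows "measure (Prho q \<rho>) (\<Union>x\<in>{0..int L}. \<Union>s\<in>low_count_seqs a L. choice_event pb x L s)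
           \<le> (real L + 1) * (t powr a * (pb / t + (1 - pb))) ^ L"
proof -
  interpret prob_space "Prho q \<rho>" by (rule prob_space_Prho)
  have choices: "(\<Union>s\<in>low_count_seqs a L. choice_event pb x L s) \<in> events" for x
    by (rule sets.finite_UN) (simp_all add: finite_low_count_seqs choice_event_in_sets)
  have "measure (Prho q \<rho>) (\<Union>x\<in>{0..int L}. \<Union>s\<in>low_count_seqs a L. choice_event pb x L s)
          \<le> (\<Sum>x\<in>{0..int L}. measure (Prho q \<rho>) (\<Union>s\<in>low_count_seqs a L. choice_event pb x L s))"
    by (rule finite_measure_subadditive_finite) (simp_all add: choices image_subset_iff)
  also have "\<dots> \<le> (\<Sum>x\<in>{0..int L}. \<Sum>s\<in>low_count_seqs a L. measure (Prho q \<rho>) (choice_event pb x L s))"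
    by (intro sum_mono finite_measure_subadditive_finite)
      (simp_all add: finite_low_count_seqs choice_event_in_sets image_subset_iff)
  also have "\<dots> \<le> (\<Sum>x\<in>{0..int L}. (t powr a * (pb / t + (1 - pb))) ^ L)"
    using assms by (intro sum_mono) (simp add: measure_choice_event chernoff_bound)
  finally show ?thesis by simp
qed

lemma measure_uncovered_box_le:
  assumes "0 \<le> q" "q \<le> 1"
  shows "measure (Prho q \<rho>) (\<Union>z\<in>space_time_box L. uncovered_event (fst z) (nat (snd z)) M)
           \<le> real (card (space_time_box L)) * ((\<Sum>k<M. pmf (poisson_pmf \<rho>) k) + (1 - q ^ L) ^ M)"
proof -
  interpret prob_space "Prho q \<rho>" by (rule prob_space_Prho)
  have "measure (Prho q \<rho>) (\<Union>z\<in>space_time_box L. uncovered_event (fst z) (nat (snd z)) M)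
          \<le> (\<Sum>z\<in>space_time_box L. measure (Prho q \<rho>) (uncovered_event (fst z) (nat (snd z)) M))"
    by (rule finite_measure_subadditive_finite)
      (simp_all add: space_time_box_def uncovered_event_in_sets image_subset_iff)
  also have "\<dots> \<le> (\<Sum>z\<in>space_time_box L. (\<Sum>k<M. pmf (poisson_pmf \<rho>) k) + (1 - q ^ L) ^ M)"
  proof (intro sum_mono order.trans[OF measure_uncovered_event_le[OF assms]] add_left_mono)
    fix z assume "z \<in> space_time_box L"
    then have "q ^ L \<le> q ^ nat (snd z)"
      using assms by (intro power_decreasing) (auto simp: space_time_box_def)
    then show "(1 - q ^ nat (snd z)) ^ M \<le> (1 - q ^ L) ^ M"
      using assms by (intro power_mono) (auto simp: power_le_one)
  qed
  finally show ?thesis by simp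
qed

lemma measure_Abad_le:
  fixes q pc pb v t :: real and k M :: nat
  assumes "0 \<le> q" "q \<le> 1" "0 \<le> pb" "pb \<le> 1" "v < 2 * pb - 1" "t > 1"
  defines "L \<equiv> Lsc k" and "a \<equiv> pb - (2 * pb - 1 - v) / 4"
  shows "measure (Prho q \<rho>) (Abad pc pb (2 * pb - 1) v k)
           \<le> (real L + 1) * (t powr a * (pb / t + (1 - pb))) ^ L
             + real (card (space_time_box L)) * ((\<Sum>k<M. pmf (poisson_pmf \<rho>) k) + (1 - q ^ L) ^ M)"
proof -
  interpret prob_space "Prho q \<rho>" by (rule prob_space_Prho)
  let ?A = "\<Union>x\<in>{0..int L}. \<Union>s\<in>low_count_seqs a L. choice_event pb x L s"
  let ?B = "\<Union>z\<in>space_time_box L. uncovered_event (fst z) (nat (snd z)) M"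
  have "?A \<in> events"
    by (intro sets.finite_UN) (simp_all add: choice_event_in_sets finite_low_count_seqs)
  moreover have "?B \<in> events"
    by (rule sets.finite_UN) (simp_all add: uncovered_event_in_sets space_time_box_def)
  ultimately have sets: "?A \<in> events" "?B \<in> events" by simp_all
  have "measure (Prho q \<rho>) (Abad pc pb (2 * pb - 1) v k) \<le> measure (Prho q \<rho>) (?A \<union> ?B)"
    using Abad_subset[OF assms(5)] sets unfolding L_def a_def
    by (intro finite_measure_mono) auto
  also have "\<dots> \<le> measure (Prho q \<rho>) ?A + measure (Prho q \<rho>) ?B"
    using sets by (rule measure_Un_le)
  finally show ?thesis
    using measure_low_count_choices_le[OF assms(3,4,6), of q \<rho> L a]
      measure_uncovered_box_le[OF assms(1,2), of \<rho> M L]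
    by linarith
qed

subsection \<open>Choice of the parameters\<close>

lemma Lsc_ge: "Lsc k \<ge> 100 + k"
proof (induction k)
  case (Suc k)
  have "sqrt 100 \<le> sqrt (real (Lsc k))" using Suc by (subst real_sqrt_le_iff) simp
  then have "10 \<le> sqrt (real (Lsc k))" by simp
  then have "10 \<le> nat \<lfloor>sqrt (real (Lsc k))\<rfloor>" by linarith
  then have "10 * Lsc k \<le> Lsc (Suc k)" by simp
  with Suc show ?case by linarith
qed simp

lemma dens_ge: "0 \<le> \<rho>0 \<Longrightarrow> \<rho>0 \<le> dens \<rho>0 k"
proof (induction k)
  case (Suc k)
  then have "0 \<le> real (Lsc k) powr (-1/16) * dens \<rho>0 k" by simp
  then have "dens \<rho>0 k \<le> dens \<rho>0 (Suc k)" by (simp add: algebra_simps)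
  with Suc show ?case by linarith
qed simp

lemma eventually_exp_decay_lt_exp_ln_powr:
  fixes \<theta> :: real
  assumes "0 < \<theta>" "\<theta> < 1"
  shows "\<forall>\<^sub>F L in sequentially. (real L + 1) * \<theta> ^ L < exp (- (ln (real L) powr (3/2))) / 2"
proof -
  define c where "c = - ln \<theta>"
  have "c > 0" using assms by (simp add: c_def)
  then have "((\<lambda>x::real. 2 * (x + 1) * exp (- c * x) * exp (ln x powr (3/2))) \<longlongrightarrow> 0) at_top"
    by real_asymp
  then have "\<forall>\<^sub>F x in at_top. 2 * (x + 1) * exp (- c * x) * exp (ln x powr (3/2)) < (1::real)"
    by (rule order_tendstoD) simp
  then have "\<forall>\<^sub>F L in sequentially.
               2 * (real L + 1) * exp (- c * real L) * exp (ln (real L) powr (3/2)) < 1"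
    using eventually_compose_filterlim filterlim_real_sequentially by blast
  moreover have "exp (- c * real L) = \<theta> ^ L" for L
    using assms exp_of_nat_mult[of L "ln \<theta>"] by (simp add: c_def mult.commute)
  ultimately have "\<forall>\<^sub>F L in sequentially.
                     2 * (real L + 1) * \<theta> ^ L * exp (ln (real L) powr (3/2)) < 1"
    by simp
  then show ?thesis by (rule eventually_mono) (simp add: exp_minus field_simps)
qed

lemma poisson_cdf_tendsto_zero:
  "((\<lambda>\<rho>. \<Sum>k<M. pmf (poisson_pmf \<rho>) k) \<longlongrightarrow> 0) at_top"
proof -
  have "((\<lambda>\<rho>::real. \<Sum>k<M. \<rho> ^ k / exp \<rho> / fact k) \<longlongrightarrow> (\<Sum>k<M. 0 / fact k)) at_top"
    by (intro tendsto_sum tendsto_divide tendsto_power_div_exp_0 tendsto_const) auto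
  moreover have "\<forall>\<^sub>F \<rho> in at_top. (\<Sum>k<M. \<rho> ^ k / exp \<rho> / fact k) = (\<Sum>k<M. pmf (poisson_pmf \<rho>) k)"
    using eventually_gt_at_top[of 0]
    by eventually_elim (simp add: pmf_poisson exp_minus field_simps)
  ultimately show ?thesis by (simp add: Lim_transform_eventually)
qed

lemma covering_error_small:
  fixes q K \<epsilon> :: real
  assumes "0 < q" "q \<le> 1" "0 \<le> K" "0 < \<epsilon>"
  shows "\<exists>M \<rho>0. \<rho>0 \<ge> 1 \<and>
           (\<forall>\<rho>\<ge>\<rho>0. K * ((\<Sum>k<M. pmf (poisson_pmf \<rho>) k) + (1 - q ^ L) ^ M) < \<epsilon>)"
proof -
  define \<delta> where "\<delta> = \<epsilon> / (2 * (K + 1))"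
  have "\<delta> > 0" using assms by (simp add: \<delta>_def)
  have "(\<lambda>M. (1 - q ^ L) ^ M) \<longlonglongrightarrow> 0"
    using assms by (intro LIMSEQ_power_zero) (auto simp: power_le_one)
  from order_tendstoD(2)[OF this \<open>\<delta> > 0\<close>] obtain M where M: "(1 - q ^ L) ^ M < \<delta>"
    by (auto simp: eventually_sequentially)
  from order_tendstoD(2)[OF poisson_cdf_tendsto_zero \<open>\<delta> > 0\<close>] obtain R
    where R: "\<And>\<rho>. \<rho> \<ge> R \<Longrightarrow> (\<Sum>k<M. pmf (poisson_pmf \<rho>) k) < \<delta>"
    by (auto simp: eventually_at_top_linorder)
  have "K * ((\<Sum>k<M. pmf (poisson_pmf \<rho>) k) + (1 - q ^ L) ^ M) < \<epsilon>" if "\<rho> \<ge> max 1 R" for \<rho>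
  proof -
    have "K * ((\<Sum>k<M. pmf (poisson_pmf \<rho>) k) + (1 - q ^ L) ^ M) \<le> K * (2 * \<delta>)"
      using R[of \<rho>] M that assms(3) by (intro mult_left_mono) auto
    also have "\<dots> < \<epsilon>" using assms by (simp add: \<delta>_def field_simps)
    finally show ?thesis .
  qed
  then show ?thesis by (intro exI[of _ M] exI[of _ "max 1 R"]) auto
qed

theorem lemma3p4:
  fixes q pc pb vc vb v :: real
  assumes "0 < q" "q < 1"
    and "0 \<le> pc" "pc \<le> 1" "0 \<le> pb" "pb \<le> 1"
    and "vc = 2 * pc - 1" "vb = 2 * pb - 1"
    and "vc < vb" "v < vb"
  shows "\<forall>k'::nat. k' \<ge> 1 \<longrightarrow> (\<exists>k2 \<ge> k'. \<exists>\<rho>0 \<ge> 1.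
           pk q pc pb v \<rho>0 k2 < exp (- (ln (real (Lsc k2)) powr (3/2))))"
proof (intro allI impI)
  fix k' :: nat
  have v: "v < 2 * pb - 1" and "0 < pb" using assms by linarith+
  define a where "a = pb - (2 * pb - 1 - v) / 4"
  obtain t where t: "t > 1"
    and "0 < t powr a * (pb / t + (1 - pb))" "t powr a * (pb / t + (1 - pb)) < 1"
    using chernoff_base_lt_one[of a pb] v \<open>0 < pb\<close> assms by (auto simp: a_def)
  then obtain N where N: "\<And>L. L \<ge> N \<Longrightarrow>
      (real L + 1) * (t powr a * (pb / t + (1 - pb))) ^ L < exp (- (ln (real L) powr (3/2))) / 2"
    using eventually_exp_decay_lt_exp_ln_powr unfolding eventually_sequentially by blast
  define k2 where "k2 = max k' N"
  define L where "L = Lsc k2"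
  obtain M \<rho>0 where "\<rho>0 \<ge> 1" and M: "\<And>\<rho>. \<rho> \<ge> \<rho>0 \<Longrightarrow>
      real (card (space_time_box L)) * ((\<Sum>k<M. pmf (poisson_pmf \<rho>) k) + (1 - q ^ L) ^ M)
        < exp (- (ln (real L) powr (3/2))) / 2"
    using covering_error_small[of q "real (card (space_time_box L))"
        "exp (- (ln (real L) powr (3/2))) / 2" L] assms by (auto simp del: pmf_poisson)
  have "\<rho>0 \<le> dens \<rho>0 k2" using \<open>\<rho>0 \<ge> 1\<close> by (simp add: dens_ge)
  have "N \<le> L" using Lsc_ge[of k2] by (simp add: L_def k2_def)
  have "pk q pc pb v \<rho>0 k2 \<le> (real L + 1) * (t powr a * (pb / t + (1 - pb))) ^ L
      + real (card (space_time_box L)) * ((\<Sum>k<M. pmf (poisson_pmf (dens \<rho>0 k2)) k) + (1 - q ^ L) ^ M)"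
    unfolding pk_def L_def a_def using assms by (intro measure_Abad_le v t) auto
  also have "\<dots> < exp (- (ln (real L) powr (3/2))) / 2 + exp (- (ln (real L) powr (3/2))) / 2"
    using N[OF \<open>N \<le> L\<close>] M[OF \<open>\<rho>0 \<le> dens \<rho>0 k2\<close>] by (rule add_strict_mono)
  finally have "pk q pc pb v \<rho>0 k2 < exp (- (ln (real L) powr (3/2)))" by simp
  then show "\<exists>k2 \<ge> k'. \<exists>\<rho>0 \<ge> 1. pk q pc pb v \<rho>0 k2 < exp (- (ln (real (Lsc k2)) powr (3/2)))"
    using \<open>\<rho>0 \<ge> 1\<close> unfolding L_def k2_def by (meson max.cobounded1)
qed

end
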